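(* Fix real numbers $\alpha>0$ and $c>-1$ such that $\frac{\alpha}{1+c}\le\frac12$. If $v_1,\ldots,v_n$ are positive integers satisfying $\frac{v_i}{v_{i-1}}\ge i+c-1$ for all $2\le i\le n$, then $\mathrm{ML}(v_1,\ldots,v_n)\ge\frac{\alpha}{n+c}$.
   Context: For a real number $x$, $\Vert x\Vert$ denotes the distance from $x$ to the nearest integer. For positive integers $v_1,\ldots,v_n$, the maximum loneliness is $\mathrm{ML}(v_1,\ldots,v_n)=\max_{t\in\mathbb{R}}\min_{1\le i\le n}\Vert t v_i\Vert$. *)

theory Defs
  imports "HOL-Analysis.Analysis"
begin

definition dist_int :: "real \<Rightarrow> real" where
  "dist_int x = \<bar>x - of_int (round x)\<bar>"

text \<open>Maximum loneliness of speeds v 1, ..., v n (n >= 1):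
  sup over real t of min over 1 <= i <= n of dist_int (t * v i).
  The supremum is attained (continuous periodic function), so this is the max.\<close>
definition max_loneliness :: "nat \<Rightarrow> (nat \<Rightarrow> nat) \<Rightarrow> real" where
  "max_loneliness n v = (SUP t::real. Min ((\<lambda>i. dist_int (t * real (v i))) ` {1..n}))"

end

theory Submission
  imports Defs
begin

text \<open>If \<open>c \<ge> 0\<close> (or \<open>n = 1\<close>) the speeds are nondecreasing and a greedy argument works.
  Given \<open>t\<^sub>0\<close> with \<open>\<parallel>t\<^sub>0 v\<^sub>i\<parallel> \<ge> \<alpha> / (k + c)\<close> for all \<open>i \<le> k\<close>, move \<open>t\<^sub>0\<close> by at most
  \<open>\<delta> / v\<^sub>k\<^sub>+\<^sub>1\<close>, where \<open>\<delta> = \<alpha> / (k + 1 + c)\<close>, so that \<open>\<parallel>t v\<^sub>k\<^sub>+\<^sub>1\<parallel> \<ge> \<delta>\<close>. Since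
  \<open>v\<^sub>i \<le> v\<^sub>k\<^sub>+\<^sub>1 / (k + c)\<close>, each \<open>\<parallel>t v\<^sub>i\<parallel>\<close> drops by at most \<open>\<delta> / (k + c)\<close>, which is exactly
  \<open>\<alpha> / (k + c) - \<delta>\<close>.

  If \<open>c < 0\<close> and \<open>n \<ge> 2\<close>, the claimed bound is below \<open>1 / (2n)\<close>, and that bound holds for any
  positive integer speeds by a union bound: the times \<open>t \<in> [0, 1]\<close> with \<open>\<parallel>t v\<parallel> < \<delta>\<close> have
  measure at most \<open>2\<delta>\<close>.\<close>

lemma dist_int_le: "dist_int x \<le> \<bar>x - of_int k\<bar>"
  unfolding dist_int_def by (rule round_diff_minimal)

lemma dist_int_le_half: "dist_int x \<le> 1/2"
  using of_int_round_abs_le[of x] by (simp add: dist_int_def abs_minus_commute)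

lemma dist_int_diff_le: "dist_int x \<le> dist_int y + \<bar>x - y\<bar>"
  using dist_int_le[of x "round y"] by (simp add: dist_int_def)

lemma dist_int_of_int_add: "dist_int (of_int k + x) = dist_int x"
  using dist_int_le[of x "round (of_int k + x) - k"] dist_int_le[of "of_int k + x" "k + round x"]
  by (simp add: dist_int_def algebra_simps)

lemma dist_int_eq_abs:
  assumes "\<bar>x\<bar> \<le> 1/2"
  shows "dist_int x = \<bar>x\<bar>"
proof (rule antisym)
  show "dist_int x \<le> \<bar>x\<bar>" using dist_int_le[of x 0] by simp
  have "\<bar>x\<bar> \<le> \<bar>x - of_int k\<bar>" for k
  proof (cases "k = 0")
    case False
    then have "1 \<le> \<bar>real_of_int k\<bar>" by linarith
    with assms show ?thesis by arith
  qed simp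
  then show "\<bar>x\<bar> \<le> dist_int x" by (simp add: dist_int_def)
qed

lemma exists_far_from_int:
  fixes u x :: real
  assumes "0 \<le> x" "x \<le> 1/2"
  shows "\<exists>s. \<bar>s - u\<bar> \<le> x \<and> x \<le> dist_int s"
proof (cases "x \<le> dist_int u")
  case True
  then show ?thesis by (intro exI[of _ u]) (simp add: assms)
next
  case False
  then have near: "\<bar>u - of_int (round u)\<bar> < x" by (simp add: dist_int_def)
  obtain y where "\<bar>y\<bar> = x" and "\<bar>of_int (round u) + y - u\<bar> \<le> x"
  proof (cases "u \<le> of_int (round u)")
    case True
    with near that[of "- x"] assms show ?thesis by auto
  next
    case False
    with near that[of x] assms show ?thesis by auto
  qed
  then show ?thesis
    using assms dist_int_eq_abs[of y] by (auto simp: dist_int_of_int_add)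
qed

lemma exists_far_from_int_scaled:
  fixes V x t\<^sub>0 :: real
  assumes "V > 0" "0 \<le> x" "x \<le> 1/2"
  shows "\<exists>t. \<bar>t - t\<^sub>0\<bar> \<le> x / V \<and> x \<le> dist_int (t * V)"
proof -
  obtain s where s: "\<bar>s - t\<^sub>0 * V\<bar> \<le> x" "x \<le> dist_int s"
    using exists_far_from_int assms(2,3) by blast
  have "\<bar>s / V - t\<^sub>0\<bar> = \<bar>s - t\<^sub>0 * V\<bar> / V"
    using assms(1) by (simp add: field_simps)
  with s assms(1) show ?thesis
    by (intro exI[of _ "s / V"]) (simp add: divide_right_mono)
qed

lemma lonely_time_extend:
  fixes w :: "'a \<Rightarrow> real"
  assumes "V > 0" "0 \<le> \<delta>" "\<delta> \<le> 1/2"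
    and lonely: "\<forall>i\<in>I. \<epsilon> \<le> dist_int (t\<^sub>0 * w i)"
    and slack: "\<forall>i\<in>I. \<delta> * \<bar>w i\<bar> \<le> (\<epsilon> - \<delta>) * V"
  shows "\<exists>t. \<delta> \<le> dist_int (t * V) \<and> (\<forall>i\<in>I. \<delta> \<le> dist_int (t * w i))"
proof -
  obtain t where close: "\<bar>t - t\<^sub>0\<bar> \<le> \<delta> / V" and far: "\<delta> \<le> dist_int (t * V)"
    using exists_far_from_int_scaled assms(1-3) by blast
  have "\<delta> \<le> dist_int (t * w i)" if i: "i \<in> I" for i
  proof -
    have "\<bar>t\<^sub>0 * w i - t * w i\<bar> = \<bar>t - t\<^sub>0\<bar> * \<bar>w i\<bar>"
      by (simp add: abs_mult flip: left_diff_distrib abs_minus_commute)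
    also have "\<dots> \<le> \<delta> / V * \<bar>w i\<bar>"
      using close by (rule mult_right_mono) simp
    also have "\<dots> \<le> \<epsilon> - \<delta>"
      using slack i \<open>V > 0\<close> by (simp add: field_simps)
    finally show ?thesis
      using lonely i dist_int_diff_le[of "t\<^sub>0 * w i" "t * w i"] by fastforce
  qed
  with far show ?thesis by blast
qed

lemma lonely_time_greedy:
  fixes w :: "nat \<Rightarrow> real" and \<alpha> c :: real
  assumes "\<alpha> > 0" "c > -1" "\<alpha> / (1 + c) \<le> 1/2"
    and "n \<ge> 1" "\<forall>i\<in>{1..n}. w i > 0"
    and "\<forall>i\<in>{2..n}. (real i + c - 1) * w (i - 1) \<le> w i" "mono_on {1..n} w"
  shows "\<exists>t. \<forall>i\<in>{1..n}. \<alpha> / (real n + c) \<le> dist_int (t * w i)"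
  using assms(4-7)
proof (induction n rule: nat_induct_at_least)
  case base
  have "w 1 > 0" "\<alpha> / (1 + c) \<ge> 0" using base.prems(1) assms(1,2) by simp_all
  then obtain t where "\<alpha> / (1 + c) \<le> dist_int (t * w 1)"
    using exists_far_from_int_scaled assms(3) by blast
  then show ?case by (auto simp: add.commute)
next
  case (Suc n)
  define \<epsilon> \<delta> where "\<epsilon> = \<alpha> / (real n + c)" and "\<delta> = \<alpha> / (real (Suc n) + c)"
  have nc: "real n + c > 0" using Suc.hyps assms(2) by linarith
  have mono: "mono_on {1..n} w"
    using Suc.prems(3) by (rule mono_on_subset) auto
  obtain t\<^sub>0 where lonely: "\<forall>i\<in>{1..n}. \<epsilon> \<le> dist_int (t\<^sub>0 * w i)"
    using Suc.IH[OF _ _ mono] Suc.prems(1,2) unfolding \<epsilon>_def by auto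
  have "\<delta> \<le> \<alpha> / (1 + c)"
    unfolding \<delta>_def using assms Suc.hyps by (intro divide_left_mono) auto
  then have \<delta>: "0 \<le> \<delta>" "\<delta> \<le> 1/2"
    using assms nc by (auto simp: \<delta>_def)
  have gap: "\<epsilon> - \<delta> = \<delta> / (real n + c)"
    using nc by (simp add: \<epsilon>_def \<delta>_def field_simps)
  have growth: "(real n + c) * w n \<le> w (Suc n)"
    using Suc.prems(2) Suc.hyps by (auto dest: bspec[of _ _ "Suc n"])
  have "\<delta> * \<bar>w i\<bar> \<le> (\<epsilon> - \<delta>) * w (Suc n)" if i: "i \<in> {1..n}" for i
  proof -
    have "w i \<le> w n"
      using i Suc.hyps by (intro mono_onD[OF mono]) auto
    then have "(real n + c) * w i \<le> (real n + c) * w n"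
      using nc by simp
    also note growth
    finally have "w i \<le> w (Suc n) / (real n + c)"
      using nc by (simp add: field_simps)
    moreover have "w i > 0" using Suc.prems(1) i by simp
    ultimately have "\<delta> * \<bar>w i\<bar> \<le> \<delta> * (w (Suc n) / (real n + c))"
      using \<delta>(1) by (intro mult_left_mono) auto
    also have "\<dots> = (\<epsilon> - \<delta>) * w (Suc n)"
      by (simp add: gap)
    finally show ?thesis .
  qed
  then obtain t where "\<delta> \<le> dist_int (t * w (Suc n))" "\<forall>i\<in>{1..n}. \<delta> \<le> dist_int (t * w i)"
    using lonely_time_extend[of "w (Suc n)" \<delta> "{1..n}" \<epsilon> t\<^sub>0 w] Suc.prems(1) \<delta> lonely by auto
  then have "\<forall>i\<in>{1..Suc n}. \<delta> \<le> dist_int (t * w i)"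
    by (auto simp: le_Suc_eq)
  then show ?case unfolding \<delta>_def by blast
qed

text \<open>A cover of \<open>{t \<in> {0..1}. dist_int (t * v) < \<delta>}\<close> by intervals around the points
  \<open>m / v\<close>; at \<open>m = 0\<close> and \<open>m = v\<close> only the half inside \<open>{0..1}\<close> is kept, so the total length
  is \<open>2\<delta>\<close> rather than \<open>2\<delta> (v + 1) / v\<close>.\<close>

definition near_int_cover :: "real \<Rightarrow> nat \<Rightarrow> real set" where
  "near_int_cover \<delta> v = {0..\<delta> / real v} \<union> {1 - \<delta> / real v..1} \<union>
    (\<Union>m\<in>{1..<v}. {(real m - \<delta>) / real v..(real m + \<delta>) / real v})"

lemma near_int_cover_fmeasurable: "near_int_cover \<delta> v \<in> fmeasurable lborel"
  unfolding near_int_cover_def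
  by (intro fmeasurable.Un fmeasurable.finite_UN) (auto simp: fmeasurable_def emeasure_lborel_Icc_eq)

lemma mem_near_int_cover:
  assumes "v > 0" "t \<in> {0..1}" "dist_int (t * v) < \<delta>"
  shows "t \<in> near_int_cover \<delta> v"
proof -
  define r where "r = round (t * v)"
  have near: "\<bar>t * v - r\<bar> < \<delta>" using assms(3) by (simp add: dist_int_def r_def)
  have "0 \<le> t * v" "t * v \<le> v"
    using assms(2) by (auto simp: mult_left_le_one_le)
  then have "0 \<le> r" "r \<le> int v"
    using round_mono by (fastforce simp: r_def)+
  then consider "r = 0" | "r = int v" | "r \<in> {1..<int v}" by fastforce
  then show ?thesis
  proof cases
    case 1
    with near assms(1,2) show ?thesis by (auto simp: near_int_cover_def field_simps)
  next
    case 2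
    with near assms(1,2) show ?thesis by (auto simp: near_int_cover_def field_simps)
  next
    case 3
    then have "nat r \<in> {1..<v}" "real (nat r) = r" by auto
    with near assms(1) show ?thesis
      unfolding near_int_cover_def by (intro UnI2 UN_I[of "nat r"]) (auto simp: field_simps)
  qed
qed

lemma measure_near_int_cover:
  assumes "v > 0" "0 \<le> \<delta>"
  shows "measure lborel (near_int_cover \<delta> v) \<le> 2 * \<delta>"
proof -
  let ?I = "\<lambda>m. {(real m - \<delta>) / real v..(real m + \<delta>) / real v}"
  have "measure lborel (near_int_cover \<delta> v)
      \<le> measure lborel {0..\<delta> / v} + measure lborel {1 - \<delta> / v..1} + measure lborel (\<Union>m\<in>{1..<v}. ?I m)"
    unfolding near_int_cover_def
    by (intro order.trans[OF measure_Un_le] add_right_mono measure_Un_le) auto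
  moreover have "measure lborel (\<Union>m\<in>{1..<v}. ?I m) \<le> (\<Sum>m\<in>{1..<v}. measure lborel (?I m))"
    by (intro measure_UNION_le) auto
  moreover have "(\<Sum>m\<in>{1..<v}. measure lborel (?I m)) = (v - 1) * (2 * \<delta> / v)"
    using assms by (simp add: divide_right_mono field_simps)
  moreover have "\<delta> / v + \<delta> / v + (v - 1) * (2 * \<delta> / v) = 2 * \<delta>"
    using assms by (simp add: field_simps)
  ultimately show ?thesis
    using assms by simp
qed

lemma lonely_time_union_bound:
  fixes v :: "nat \<Rightarrow> nat"
  assumes pos: "\<forall>i\<in>{1..n}. v i > 0" and "0 \<le> \<delta>" and small: "2 * real n * \<delta> < 1"
  shows "\<exists>t. \<forall>i\<in>{1..n}. \<delta> \<le> dist_int (t * real (v i))"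
proof (rule ccontr)
  assume no_lonely_time: "\<not> ?thesis"
  have "{0..1} \<subseteq> (\<Union>i\<in>{1..n}. near_int_cover \<delta> (v i))"
  proof (intro subsetI)
    fix t :: real assume "t \<in> {0..1}"
    moreover obtain i where "i \<in> {1..n}" "dist_int (t * real (v i)) < \<delta>"
      using no_lonely_time by (auto simp: not_le dest: spec[of _ t])
    ultimately show "t \<in> (\<Union>i\<in>{1..n}. near_int_cover \<delta> (v i))"
      using pos mem_near_int_cover by blast
  qed
  then have "measure lborel {0..1::real} \<le> measure lborel (\<Union>i\<in>{1..n}. near_int_cover \<delta> (v i))"
    by (intro measure_mono_fmeasurable fmeasurable.finite_UN near_int_cover_fmeasurable) auto
  also have "\<dots> \<le> (\<Sum>i\<in>{1..n}. measure lborel (near_int_cover \<delta> (v i)))"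
    by (intro measure_UNION_le fmeasurableD[OF near_int_cover_fmeasurable]) auto
  also have "\<dots> \<le> (\<Sum>i\<in>{1..n}. 2 * \<delta>)"
    using pos \<open>0 \<le> \<delta>\<close> by (intro sum_mono measure_near_int_cover) auto
  finally show False
    using small by simp
qed

lemma max_loneliness_ge:
  assumes "n \<ge> 1" and "\<forall>i\<in>{1..n}. \<delta> \<le> dist_int (t * real (v i))"
  shows "\<delta> \<le> max_loneliness n v"
proof -
  let ?f = "\<lambda>t. Min ((\<lambda>i. dist_int (t * real (v i))) ` {1..n})"
  have half: "?f s \<le> 1/2" for s
  proof -
    have "?f s \<le> dist_int (s * real (v 1))"
      using assms(1) by (intro Min_le) auto
    then show ?thesis
      using dist_int_le_half order_trans by blast
  qed
  have "bdd_above (range ?f)"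
    by (rule bdd_aboveI[of _ "1/2"]) (use half in auto)
  moreover have "\<delta> \<le> ?f t"
    using assms by (subst Min_ge_iff) auto
  ultimately show ?thesis
    unfolding max_loneliness_def by (intro cSUP_upper2[of ?f UNIV t]) auto
qed

lemma growth_of_ratio_ge:
  fixes v :: "nat \<Rightarrow> nat"
  assumes "\<forall>i\<in>{1..n}. v i > 0"
    and "\<forall>i\<in>{2..n}. real (v i) / real (v (i - 1)) \<ge> real i + c - 1"
  shows "\<forall>i\<in>{2..n}. (real i + c - 1) * real (v (i - 1)) \<le> real (v i)"
proof
  fix i assume i: "i \<in> {2..n}"
  then have "i - 1 \<in> {1..n}" by auto
  then have "v (i - 1) > 0"
    using assms(1) by blast
  with bspec[OF assms(2) i] show "(real i + c - 1) * real (v (i - 1)) \<le> real (v i)"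
    by (simp add: pos_le_divide_eq)
qed

lemma mono_on_growth:
  fixes w :: "nat \<Rightarrow> real"
  assumes "c \<ge> 0" and pos: "\<forall>i\<in>{1..n}. w i > 0"
    and growth: "\<forall>i\<in>{2..n}. (real i + c - 1) * w (i - 1) \<le> w i"
  shows "mono_on {1..n} w"
proof (rule mono_onI)
  have step: "w m \<le> w (Suc m)" if m: "m \<in> {1..<n}" for m
  proof -
    have "1 \<le> real m + c" "0 < w m"
      using m pos \<open>c \<ge> 0\<close> by auto
    then have "w m \<le> (real m + c) * w m"
      using mult_right_mono[of 1 "real m + c" "w m"] by simp
    also have "\<dots> \<le> w (Suc m)"
      using growth m by (auto dest: bspec[of _ _ "Suc m"])
    finally show ?thesis .
  qed
  fix i j assume "i \<in> {1..n}" "j \<in> {1..n}" "i \<le> j"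
  then show "w i \<le> w j"
    by (intro lift_Suc_mono_le_ivl[where N = "{1..<n}" and f = w, OF step]) auto
qed

lemma bound_lt_inverse_2n:
  fixes \<alpha> c :: real
  assumes "c > -1" "c < 0" "\<alpha> / (1 + c) \<le> 1/2" "n \<ge> 2"
  shows "2 * real n * (\<alpha> / (real n + c)) < 1"
proof -
  have "2 * \<alpha> \<le> 1 + c"
    using assms(1,3) by (simp add: field_simps)
  then have "2 * real n * \<alpha> \<le> real n * (1 + c)"
    using mult_left_mono[of "2 * \<alpha>" "1 + c" "real n"] by (simp add: algebra_simps)
  also have "\<dots> < real n + c"
    using assms(2,4) mult_strict_right_mono_neg[of 1 "real n" c] by (simp add: distrib_left)
  finally show ?thesis
    using assms(1,4) by (simp add: field_simps)
qed

theorem proposition8p2: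
  fixes \<alpha> c :: real and n :: nat and v :: "nat \<Rightarrow> nat"
  assumes "\<alpha> > 0" and "c > -1" and "\<alpha> / (1 + c) \<le> 1/2"
    and "n \<ge> 1"
    and "\<forall>i\<in>{1..n}. v i > 0"
    and "\<forall>i\<in>{2..n}. real (v i) / real (v (i - 1)) \<ge> real i + c - 1"
  shows "max_loneliness n v \<ge> \<alpha> / (real n + c)"
proof -
  have pos: "\<forall>i\<in>{1..n}. real (v i) > 0"
    using assms(5) by simp
  have growth: "\<forall>i\<in>{2..n}. (real i + c - 1) * real (v (i - 1)) \<le> real (v i)"
    using growth_of_ratio_ge assms(5,6) by blast
  have "\<exists>t. \<forall>i\<in>{1..n}. \<alpha> / (real n + c) \<le> dist_int (t * real (v i))"
  proof (cases "c < 0 \<and> n \<ge> 2")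
    case True
    moreover have "0 \<le> \<alpha> / (real n + c)"
      using assms(1,2,4) by simp
    ultimately show ?thesis
      using lonely_time_union_bound[OF assms(5)] bound_lt_inverse_2n assms(2,3) by blast
  next
    case False
    then have "mono_on {1..n} (\<lambda>i. real (v i))"
      using mono_on_growth[OF _ pos growth] by (cases "n = 1") (auto simp: mono_on_def)
    then show ?thesis
      using lonely_time_greedy[OF assms(1-4) pos growth] by blast
  qed
  then show ?thesis
    using max_loneliness_ge assms(4) by blast
qed

end
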